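(* Let $K$ be a field of characteristic zero, $m\in K[x,y]$ irreducible over $K(x)$ with $n=\deg_y(m)$, and $A=K(x)[y]/\langle m\rangle$ equipped with the derivation $'$ extending $d/dx$. Let $W=(\omega_1,\dots,\omega_n)$ be a suitable basis of $A$ with $e\in K[x]$, $M=(m_{i,j})\in K[x]^{n\times n}$ such that $eW'=MW$ and $\gcd(e,m_{1,1},\dots,m_{n,n})=1$. Let $h=\sum_{i=1}^n\frac{h_i}{de}\omega_i$ with $h_1,\dots,h_n,d\in K[x]$, $\gcd(d,e)=\gcd(h_1,\dots,h_n,d)=1$ and $d$ squarefree. Let $U$ be an integral basis of $A$ and $T\in K[x]^{n\times n}$ with $W=TU$. Suppose there exist $u\in K[x]$ and $q_1,\dots,q_n\in K[x]$ with $\gcd(q_1,\dots,q_n,u)=1$ and \[h=\Big(\sum_{i=1}^n\frac{q_i}{u}\omega_i\Big)'.\] Then $u$ divides $\det(T)$, and hence $u^2$ divides $\operatorname{Disc}(W)/\operatorname{Disc}(U)$ in $K[x]$.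
   Context: An element $f\in A$ is integral if for every $a\in\bar K$ (algebraic closure of $K$) all $n$ Puiseux series expansions of $f$ at $a$ (obtained by substituting the $n$ roots of $m$ in $\bigcup_{r\ge1}\bar K((\,(x-a)^{1/r}))$ for $y$) have nonnegative valuation (least exponent). An integral basis is a basis of the $K[x]$-module of integral elements of $A$. A suitable basis is a $K(x)$-basis of $A$ consisting of integral elements for which the normalized $e$ above is squarefree. For a tuple $W=(\omega_1,\dots,\omega_n)$, $\operatorname{Disc}(W)=\det\big((\operatorname{Tr}(\omega_i\omega_j))_{i,j}\big)$, where $\operatorname{Tr}:A\to K(x)$ is the trace map. *)

theory Defs
  imports "HOL-Algebra.Algebraic_Closure_Type"
          "HOL-Computational_Algebra.Formal_Laurent_Series"
          "HOL-Computational_Algebra.Squarefree"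
          "Jordan_Normal_Form.Determinant"
begin

text \<open>The bivariate polynomial m in K[x,y] is an element of 'a poly poly (a polynomial in y with
  coefficients in K[x]).  The algebra A = K(x)[y]/<m> is represented by the polynomials in y over
  K(x) of degree < n = deg_y m (canonical representatives modulo m).\<close>

definition liftm :: "'a::field_gcd poly poly \<Rightarrow> 'a poly fract poly" where
  "liftm m = map_poly to_fract m"

definition A_carrier :: "'a::field_gcd poly poly \<Rightarrow> 'a poly fract poly set" where
  "A_carrier m = {f. degree f < degree m}"

definition A_mult :: "'a::field_gcd poly poly \<Rightarrow> 'a poly fract poly \<Rightarrow> 'a poly fract poly \<Rightarrow> 'a poly fract poly" where
  "A_mult m f g = (f * g) mod liftm m"

definition rf_deriv :: "'a::field_gcd poly fract \<Rightarrow> 'a poly fract" where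
  "rf_deriv f = (case quot_of_fract f of (p, q) \<Rightarrow> Fract (pderiv p * q - p * pderiv q) (q ^ 2))"

definition is_derivation :: "'a::field_gcd poly poly \<Rightarrow> ('a poly fract poly \<Rightarrow> 'a poly fract poly) \<Rightarrow> bool" where
  "is_derivation m D \<longleftrightarrow>
     (\<forall>f\<in>A_carrier m. D f \<in> A_carrier m) \<and>
     (\<forall>f\<in>A_carrier m. \<forall>g\<in>A_carrier m. D (f + g) = D f + D g) \<and>
     (\<forall>f\<in>A_carrier m. \<forall>g\<in>A_carrier m.
        D (A_mult m f g) = A_mult m (D f) g + A_mult m f (D g)) \<and>
     (\<forall>c. D [:c:] = [:rf_deriv c:])"

definition lincomb :: "nat \<Rightarrow> (nat \<Rightarrow> 'a::field_gcd poly fract) \<Rightarrow> (nat \<Rightarrow> 'a poly fract poly) \<Rightarrow> 'a poly fract poly" where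
  "lincomb n c W = (\<Sum>i<n. smult (c i) (W i))"

definition is_basis :: "'a::field_gcd poly poly \<Rightarrow> (nat \<Rightarrow> 'a poly fract poly) \<Rightarrow> bool" where
  "is_basis m W \<longleftrightarrow>
     (\<forall>i<degree m. W i \<in> A_carrier m) \<and>
     (\<forall>c. lincomb (degree m) c W = 0 \<longrightarrow> (\<forall>i<degree m. c i = 0)) \<and>
     (\<forall>f\<in>A_carrier m. \<exists>c. f = lincomb (degree m) c W)"

definition coords :: "'a::field_gcd poly poly \<Rightarrow> (nat \<Rightarrow> 'a poly fract poly) \<Rightarrow> 'a poly fract poly \<Rightarrow> nat \<Rightarrow> 'a poly fract" where
  "coords m W f = (THE c. f = lincomb (degree m) c W \<and> (\<forall>i\<ge>degree m. c i = 0))"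

text \<open>A Puiseux series in (x - a)^(1/r) with coefficients in the algebraic
  closure of K is a formal Laurent series in t, where x = a + t^r.\<close>
definition subst_rf :: "'a::field_gcd alg_closure \<Rightarrow> nat \<Rightarrow> 'a poly fract \<Rightarrow> 'a alg_closure fls" where
  "subst_rf a r f = (case quot_of_fract f of (p, q) \<Rightarrow>
      poly (map_poly (\<lambda>c. fls_const (to_ac c)) p) (fls_const a + fls_X ^ r) /
      poly (map_poly (\<lambda>c. fls_const (to_ac c)) q) (fls_const a + fls_X ^ r))"

definition puiseux_root :: "'a::field_gcd poly poly \<Rightarrow> 'a alg_closure \<Rightarrow> nat \<Rightarrow> 'a alg_closure fls \<Rightarrow> bool" where
  "puiseux_root m a r phi \<longleftrightarrow> poly (map_poly (subst_rf a r) (liftm m)) phi = 0"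

definition integral :: "'a::field_gcd poly poly \<Rightarrow> 'a poly fract poly \<Rightarrow> bool" where
  "integral m f \<longleftrightarrow>
     (\<forall>a r phi. r \<ge> 1 \<longrightarrow> puiseux_root m a r phi \<longrightarrow>
        fls_subdegree (poly (map_poly (subst_rf a r) f) phi) \<ge> 0)"

definition integral_basis :: "'a::field_gcd poly poly \<Rightarrow> (nat \<Rightarrow> 'a poly fract poly) \<Rightarrow> bool" where
  "integral_basis m U \<longleftrightarrow> is_basis m U \<and> (\<forall>i<degree m. integral m (U i)) \<and>
     (\<forall>f\<in>A_carrier m. integral m f \<longrightarrow> (\<exists>c. f = lincomb (degree m) (\<lambda>i. to_fract (c i)) U))"

text \<open>normalized e: the monic least common denominator of the entries of the matrix
  expressing W' in terms of W\<close>
definition norm_e :: "'a::field_gcd poly poly \<Rightarrow> ('a poly fract poly \<Rightarrow> 'a poly fract poly) \<Rightarrow> (nat \<Rightarrow> 'a poly fract poly) \<Rightarrow> 'a poly" where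
  "norm_e m D W = Lcm {snd (quot_of_fract (coords m W (D (W i)) j)) | i j. i < degree m \<and> j < degree m}"

definition suitable_basis :: "'a::field_gcd poly poly \<Rightarrow> ('a poly fract poly \<Rightarrow> 'a poly fract poly) \<Rightarrow> (nat \<Rightarrow> 'a poly fract poly) \<Rightarrow> bool" where
  "suitable_basis m D W \<longleftrightarrow> is_basis m W \<and> (\<forall>i<degree m. integral m (W i)) \<and>
     squarefree (norm_e m D W)"

text \<open>trace of multiplication by f, computed in the basis 1, y, ..., y^(n-1)\<close>
definition A_trace :: "'a::field_gcd poly poly \<Rightarrow> 'a poly fract poly \<Rightarrow> 'a poly fract" where
  "A_trace m f = (\<Sum>i<degree m. coeff (A_mult m f (monom 1 i)) i)"

definition Disc :: "'a::field_gcd poly poly \<Rightarrow> (nat \<Rightarrow> 'a poly fract poly) \<Rightarrow> 'a poly fract" where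
  "Disc m W = det (mat (degree m) (degree m) (\<lambda>(i, j). A_trace m (A_mult m (W i) (W j))))"

end

(*
  Let g = sum (q_i/u) w_i, so that h = g'.  Fix a Puiseux expansion x = a + t^r.  Since d*e h is
  a polynomial combination of the integral w_i and d*e is squarefree (e is, because W is suitable
  and gcd(e, M) = 1), it has at most a simple root at a, so val_t(h) >= -r.  On expansions the
  derivation of A becomes (r t^(r-1))^(-1) d/dt, which lowers a negative valuation by exactly r;
  hence val_t(g) >= 0 everywhere and g is integral.  Its coordinates in the integral basis U are
  then the polynomials (q^t T)_j / u, and gcd(q, u) = 1 forces u | det T (multiply by adj T).
  Finally Disc(W) = det(T)^2 Disc(U).
*)
theory Submission
  imports Defs "Jordan_Normal_Form.Char_Poly"
begin

interpretation fls_const_hom: map_poly_comm_ring_hom "fls_const :: 'b::comm_ring_1 \<Rightarrow> 'b fls"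
  by unfold_locales (simp_all add: fls_plus_const[symmetric])

interpretation to_fract_hom: inj_idom_hom "to_fract :: 'b::idom \<Rightarrow> 'b fract"
  by unfold_locales simp_all

interpretation to_ac_hom: field_hom "to_ac :: 'b::field \<Rightarrow> 'b alg_closure"
  by unfold_locales simp_all

interpretation fls_const_to_ac_hom:
  map_poly_comm_ring_hom "\<lambda>c::'b::field. fls_const (to_ac c)"
  by unfold_locales (simp_all add: fls_plus_const[symmetric])

section \<open>Expansion of polynomials at $x = a + t^r$\<close>

lemma fls_subdegree_nonneg_add:
  "0 \<le> fls_subdegree F \<Longrightarrow> 0 \<le> fls_subdegree G \<Longrightarrow> 0 \<le> fls_subdegree (F + G)"
  using fls_plus_subdegree[of F G] by (cases "F + G = 0") auto

lemma fls_subdegree_nonneg_mult: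
  fixes F G :: "'b::idom fls"
  shows "0 \<le> fls_subdegree F \<Longrightarrow> 0 \<le> fls_subdegree G \<Longrightarrow> 0 \<le> fls_subdegree (F * G)"
  by (cases "F = 0 \<or> G = 0") auto

lemma fls_subdegree_nonneg_sum:
  "(\<And>i. i \<in> S \<Longrightarrow> 0 \<le> fls_subdegree (f i)) \<Longrightarrow> 0 \<le> fls_subdegree (sum f S)"
  by (induction S rule: infinite_finite_induct) (simp_all add: fls_subdegree_nonneg_add)

lemma poly_fls_const_shift_eq_fps_to_fls:
  fixes q :: "'b::field poly"
  shows "poly (map_poly fls_const q) (fls_const a + fls_X ^ r)
         = fps_to_fls (poly (map_poly fps_const q) (fps_const a + fps_X ^ r))"
  by (induction q) (simp_all add: map_poly_pCons fls_times_fps_to_fls fps_to_fls_power)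

lemma fps_nth_0_poly_fps_const_shift:
  fixes q :: "'b::field poly"
  assumes "r \<ge> 1"
  shows "fps_nth (poly (map_poly fps_const q) (fps_const a + fps_X ^ r)) 0 = poly q a"
  using assms by (induction q) (simp_all add: map_poly_pCons)

lemma fls_subdegree_poly_shift_nonneg:
  fixes q :: "'b::field poly"
  shows "0 \<le> fls_subdegree (poly (map_poly fls_const q) (fls_const a + fls_X ^ r))"
  unfolding poly_fls_const_shift_eq_fps_to_fls by (rule fls_subdegree_fls_to_fps_gt0)

lemma fls_subdegree_poly_shift:
  fixes q :: "'b::field poly"
  assumes r: "r \<ge> 1" and q: "q \<noteq> 0"
  shows "poly (map_poly fls_const q) (fls_const a + fls_X ^ r) \<noteq> 0"
    and "fls_subdegree (poly (map_poly fls_const q) (fls_const a + fls_X ^ r)) = int r * int (order a q)"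
proof -
  let ?ev = "\<lambda>q. poly (map_poly fls_const q) (fls_const a + fls_X ^ r)"
  obtain q1 where q1: "q = [:-a, 1:] ^ order a q * q1" and "\<not> [:-a, 1:] dvd q1"
    using order_decomp[OF q] by blast
  then have "poly q1 a \<noteq> 0"
    by (simp add: poly_eq_0_iff_dvd)
  then have unit_part: "fps_nth (poly (map_poly fps_const q1) (fps_const a + fps_X ^ r)) 0 \<noteq> 0"
    using fps_nth_0_poly_fps_const_shift[OF r, of q1 a] by simp
  have q1_nz: "?ev q1 \<noteq> 0" and q1_val: "fls_subdegree (?ev q1) = 0"
    using unit_part by (auto simp: poly_fls_const_shift_eq_fps_to_fls fls_subdegree_fls_to_fps)
  have "?ev [:-a, 1:] = fls_X ^ r"
    by (simp add: map_poly_pCons)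
  then have "?ev q = fls_X ^ (r * order a q) * ?ev q1"
    by (subst q1) (simp add: fls_const_hom.hom_mult fls_const_hom.hom_power power_mult)
  then show "?ev q \<noteq> 0" and "fls_subdegree (?ev q) = int r * int (order a q)"
    using q1_nz q1_val by (simp_all add: fls_subdegree_mult_fls_X_power)
qed

text \<open>A Puiseux chart at $a$ of ramification index $r$: the substitution $x = a + t^r$ maps
  $K(x)$ into the Laurent series in $t$ over the algebraic closure, and $d/dx$ becomes
  $(r t^{r-1})^{-1} d/dt$.\<close>

locale puiseux_chart =
  fixes a :: "'a::{field_char_0,field_gcd} alg_closure" and r :: nat
  assumes r_pos: "r \<ge> 1"
begin

definition expand_poly :: "'a poly \<Rightarrow> 'a alg_closure fls" where
  "expand_poly p = poly (map_poly (\<lambda>c. fls_const (to_ac c)) p) (fls_const a + fls_X ^ r)"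

definition dx :: "'a alg_closure fls \<Rightarrow> 'a alg_closure fls" where
  "dx F = fls_deriv F * inverse (of_nat r * fls_X ^ (r - 1))"

sublocale expand_poly_hom: comm_ring_hom expand_poly
  by unfold_locales
    (simp_all add: expand_poly_def fls_const_to_ac_hom.hom_add fls_const_to_ac_hom.hom_mult)

lemma expand_poly_eq: "expand_poly p = poly (map_poly fls_const (map_poly to_ac p)) (fls_const a + fls_X ^ r)"
  unfolding expand_poly_def by (simp add: map_poly_map_poly o_def)

lemma expand_poly_pCons:
  "expand_poly (pCons c p) = fls_const (to_ac c) + (fls_const a + fls_X ^ r) * expand_poly p"
proof -
  have "map_poly (\<lambda>c. fls_const (to_ac c)) (pCons c p)
      = pCons (fls_const (to_ac c)) (map_poly (\<lambda>c. fls_const (to_ac c)) p)"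
    by (rule Polynomial.map_poly_pCons) simp
  then show ?thesis
    unfolding expand_poly_def by (simp only: poly_pCons)
qed

lemma expand_poly_nonzero: "p \<noteq> 0 \<Longrightarrow> expand_poly p \<noteq> 0"
  unfolding expand_poly_eq by (rule fls_subdegree_poly_shift(1)[OF r_pos]) simp

lemma fls_subdegree_expand_poly:
  "p \<noteq> 0 \<Longrightarrow> fls_subdegree (expand_poly p) = int r * int (order a (map_poly to_ac p))"
  unfolding expand_poly_eq by (rule fls_subdegree_poly_shift(2)[OF r_pos]) simp

lemma fls_subdegree_expand_poly_nonneg: "0 \<le> fls_subdegree (expand_poly p)"
  unfolding expand_poly_eq by (rule fls_subdegree_poly_shift_nonneg)

lemma subst_rf_Fract:
  assumes q: "q \<noteq> 0"
  shows "subst_rf a r (Fract p q) = expand_poly p / expand_poly q"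
proof -
  obtain p0 q0 where pq0: "quot_of_fract (Fract p q) = (p0, q0)"
    by force
  have q0: "q0 \<noteq> 0"
    using snd_quot_of_fract_nonzero[of "Fract p q"] pq0 by simp
  have "Fract p0 q0 = Fract p q"
    using Fract_quot_of_fract[of "Fract p q"] pq0 by simp
  then have "expand_poly p0 * expand_poly q = expand_poly p * expand_poly q0"
    using q q0 by (simp add: eq_fract flip: expand_poly_hom.hom_mult)
  then have "expand_poly p0 / expand_poly q0 = expand_poly p / expand_poly q"
    using q q0 expand_poly_nonzero by (simp add: field_simps)
  then show ?thesis
    unfolding subst_rf_def pq0 expand_poly_def by simp
qed

lemma subst_rf_to_fract: "subst_rf a r (to_fract p) = expand_poly p"
  unfolding to_fract_def by (simp add: subst_rf_Fract)

sublocale subst_rf_hom: comm_ring_hom "subst_rf a r"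
proof
  fix x y :: "'a poly fract"
  obtain p q where x: "x = Fract p q" "q \<noteq> 0"
    by (cases x) auto
  obtain p' q' where y: "y = Fract p' q'" "q' \<noteq> 0"
    by (cases y) auto
  have nz: "expand_poly q \<noteq> 0" "expand_poly q' \<noteq> 0"
    using x y expand_poly_nonzero by auto
  show "subst_rf a r (x + y) = subst_rf a r x + subst_rf a r y"
    using x y nz by (simp add: subst_rf_Fract expand_poly_hom.hom_add expand_poly_hom.hom_mult
        field_simps)
  show "subst_rf a r (x * y) = subst_rf a r x * subst_rf a r y"
    using x y nz by (simp add: subst_rf_Fract expand_poly_hom.hom_mult)
next
  show "subst_rf a r 1 = 1"
    using subst_rf_to_fract[of 1] by simp
  show "subst_rf a r 0 = 0"
    using subst_rf_to_fract[of 0] by simp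
qed

lemma subst_rf_nonzero: "c \<noteq> 0 \<Longrightarrow> subst_rf a r c \<noteq> 0"
  using subst_rf_hom.hom_mult[of c "inverse c"] by auto

lemma dx_add: "dx (F + G) = dx F + dx G"
  unfolding dx_def by (simp add: algebra_simps)

lemma dx_mult: "dx (F * G) = dx F * G + F * dx G"
  unfolding dx_def by (simp add: algebra_simps)

lemma dx_const [simp]: "dx (fls_const c) = 0"
  unfolding dx_def by simp

lemma dx_X_power: "dx (fls_X ^ r) = 1"
  unfolding dx_def fls_deriv_X_power using r_pos by (intro right_inverse) simp

lemma dx_expand_poly: "dx (expand_poly p) = expand_poly (pderiv p)"
proof (induction p)
  case (pCons c p)
  have "expand_poly (pCons 0 (pderiv p)) = (fls_const a + fls_X ^ r) * expand_poly (pderiv p)"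
    by (simp add: expand_poly_pCons)
  with pCons.IH show ?case
    by (simp add: expand_poly_pCons dx_add dx_mult dx_X_power pderiv_pCons expand_poly_hom.hom_add)
qed (simp add: dx_def)

lemma dx_subst_rf: "dx (subst_rf a r c) = subst_rf a r (rf_deriv c)"
proof -
  obtain p q where pq: "quot_of_fract c = (p, q)"
    by force
  have q: "q \<noteq> 0"
    using snd_quot_of_fract_nonzero[of c] pq by simp
  have c: "c = Fract p q"
    using Fract_quot_of_fract[of c] pq by simp
  have q_nz: "expand_poly q \<noteq> 0"
    using expand_poly_nonzero q by auto
  have c_expand: "subst_rf a r c = expand_poly p / expand_poly q"
    by (simp add: c subst_rf_Fract q)
  then have "dx (subst_rf a r c * expand_poly q) = dx (expand_poly p)"
    using q_nz by simp
  then have "dx (subst_rf a r c) * expand_poly q + subst_rf a r c * expand_poly (pderiv q)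
      = expand_poly (pderiv p)"
    by (simp add: dx_mult dx_expand_poly)
  then have "dx (subst_rf a r c)
      = (expand_poly (pderiv p) - subst_rf a r c * expand_poly (pderiv q)) / expand_poly q"
    using q_nz by (simp add: eq_divide_eq algebra_simps)
  also have "\<dots> = (expand_poly (pderiv p) * expand_poly q
      - expand_poly p * expand_poly (pderiv q)) / expand_poly q ^ 2"
    using q_nz unfolding c_expand by (simp add: field_simps power2_eq_square)
  also have "\<dots> = subst_rf a r (rf_deriv c)"
    unfolding rf_deriv_def pq using q
    by (simp add: subst_rf_Fract expand_poly_hom.hom_minus expand_poly_hom.hom_mult
        expand_poly_hom.hom_power)
  finally show ?thesis .
qed

lemma dx_subdegree_neg:
  assumes neg: "fls_subdegree F < 0"
  shows "dx F \<noteq> 0" and "fls_subdegree (dx F) = fls_subdegree F - int r"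
proof -
  have deriv_val: "fls_subdegree (fls_deriv F) = fls_subdegree F - 1"
    using neg by (intro fls_subdegree_deriv) simp
  have deriv_nz: "fls_deriv F \<noteq> 0"
  proof
    assume "fls_deriv F = 0"
    then have "fls_subdegree F = 1"
      using deriv_val by simp
    then show False
      using neg by simp
  qed
  have "(of_nat r * fls_X ^ (r - 1) :: 'a alg_closure fls) = fls_const (of_nat r) * fls_X ^ (r - 1)"
    by (simp add: fls_of_nat)
  moreover have "fls_const (of_nat r :: 'a alg_closure) \<noteq> 0"
    using r_pos by simp
  ultimately have "(of_nat r * fls_X ^ (r - 1) :: 'a alg_closure fls) \<noteq> 0"
    and "fls_subdegree (of_nat r * fls_X ^ (r - 1) :: 'a alg_closure fls) = int r - 1"
    using r_pos by (simp_all add: fls_subdegree_mult of_nat_diff)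
  then show "dx F \<noteq> 0" and "fls_subdegree (dx F) = fls_subdegree F - int r"
    unfolding dx_def using deriv_nz deriv_val by (simp_all add: fls_subdegree_mult)
qed

end

section \<open>Derivations along a ring homomorphism\<close>

definition derivation_along ::
    "('b::comm_ring_1 poly \<Rightarrow> 'c::comm_ring_1) \<Rightarrow> ('b \<Rightarrow> 'c) \<Rightarrow> ('b poly \<Rightarrow> 'c) \<Rightarrow> bool" where
  "derivation_along s k \<delta> \<longleftrightarrow>
     (\<forall>F G. \<delta> (F + G) = \<delta> F + \<delta> G) \<and> (\<forall>F G. \<delta> (F * G) = \<delta> F * s G + s F * \<delta> G) \<and>
     (\<forall>c. \<delta> [:c:] = k c)"

lemma derivation_along_eq:
  fixes s :: "'b::idom poly \<Rightarrow> 'c::comm_ring_1"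
  assumes s: "comm_ring_hom s" and \<delta>: "derivation_along s k \<delta>"
  shows "\<delta> F = poly (map_poly k F) (s [:0, 1:]) + \<delta> [:0, 1:] * s (pderiv F)"
proof -
  interpret s: comm_ring_hom s by (rule s)
  have add: "\<delta> (F + G) = \<delta> F + \<delta> G" and mult: "\<delta> (F * G) = \<delta> F * s G + s F * \<delta> G"
    and const: "\<delta> [:c:] = k c" for F G c
    using \<delta> unfolding derivation_along_def by blast+
  have k0: "k 0 = 0"
    using add[of 0 0] const[of 0] by simp
  show ?thesis
  proof (induction F)
    case 0
    show ?case
      using add[of 0 0] by simp
  next
    case (pCons c F)
    have split: "pCons c F = [:c:] + [:0, 1:] * F"
      by simp
    have \<delta>_pCons: "\<delta> (pCons c F) = k c + (\<delta> [:0, 1:] * s F + s [:0, 1:] * \<delta> F)"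
      unfolding split add mult const ..
    have "pderiv (pCons c F) = F + [:0, 1:] * pderiv F"
      by (simp add: pderiv_pCons)
    then have s_pderiv: "s (pderiv (pCons c F)) = s F + s [:0, 1:] * s (pderiv F)"
      by (simp only: s.hom_add s.hom_mult)
    have "map_poly k (pCons c F) = pCons (k c) (map_poly k F)"
      by (rule Polynomial.map_poly_pCons) (rule k0)
    then show ?case
      using pCons.IH \<delta>_pCons s_pderiv by (simp only: poly_pCons) (simp add: algebra_simps)
  qed
qed

lemma derivation_along_unique:
  fixes s :: "'b::idom poly \<Rightarrow> 'c::idom"
  assumes s: "comm_ring_hom s"
    and \<delta>1: "derivation_along s k \<delta>1" and \<delta>2: "derivation_along s k \<delta>2"
    and L: "\<delta>1 L = 0" "\<delta>2 L = 0" "s (pderiv L) \<noteq> 0"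
  shows "\<delta>1 F = \<delta>2 F"
proof -
  note eq1 = derivation_along_eq[OF s \<delta>1] and eq2 = derivation_along_eq[OF s \<delta>2]
  have "poly (map_poly k L) (s [:0, 1:]) + \<delta>1 [:0, 1:] * s (pderiv L)
      = poly (map_poly k L) (s [:0, 1:]) + \<delta>2 [:0, 1:] * s (pderiv L)"
    using eq1[of L] eq2[of L] unfolding L(1,2) by (rule trans[OF sym])
  then have "\<delta>1 [:0, 1:] * s (pderiv L) = \<delta>2 [:0, 1:] * s (pderiv L)"
    by (rule add_left_imp_eq)
  then have "\<delta>1 [:0, 1:] = \<delta>2 [:0, 1:]"
    using L(3) by simp
  then show ?thesis
    using eq1[of F] eq2[of F] by simp
qed

lemma irreducible_dvd_if_hom_eq_0:
  fixes L :: "'b::field poly" and s :: "'b poly \<Rightarrow> 'c::comm_ring_1"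
  assumes s: "comm_ring_hom s" and const: "\<And>c. c \<noteq> 0 \<Longrightarrow> s [:c:] \<noteq> 0"
    and L: "irreducible L" "s L = 0" and F: "s F = 0"
  shows "L dvd F"
proof -
  interpret s: comm_ring_hom s by (rule s)
  have "L \<noteq> 0 \<and> s L = 0"
    using L by auto
  then obtain F0 where F0: "F0 \<noteq> 0" "s F0 = 0"
    and least: "\<And>F. F \<noteq> 0 \<Longrightarrow> s F = 0 \<Longrightarrow> degree F0 \<le> degree F"
    using ex_has_least_nat[where P = "\<lambda>F. F \<noteq> 0 \<and> s F = 0" and m = degree] by blast
  have F0_dvd: "F0 dvd G" if "s G = 0" for G
  proof (rule ccontr)
    assume not_dvd: "\<not> F0 dvd G"
    have "G mod F0 = G - (G div F0) * F0"
      by (simp add: minus_div_mult_eq_mod)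
    then have "s (G mod F0) = 0"
      using that F0 by (simp add: s.hom_minus s.hom_mult)
    moreover have "G mod F0 \<noteq> 0"
      using not_dvd by (simp add: mod_eq_0_iff_dvd)
    moreover have "degree (G mod F0) < degree F0"
      using degree_mod_less_degree[OF F0(1) not_dvd] .
    ultimately show False
      using least by fastforce
  qed
  have "degree F0 \<noteq> 0"
  proof
    assume "degree F0 = 0"
    then obtain c where "F0 = [:c:]"
      by (metis degree_eq_zeroE)
    then show False
      using F0 const by auto
  qed
  then have "\<not> is_unit F0"
    by (simp add: is_unit_iff_degree F0(1))
  moreover obtain G where G: "L = F0 * G"
    using F0_dvd[OF L(2)] by blast
  ultimately have "is_unit G"
    using irreducibleD[OF L(1) G] by blast
  then have "L dvd F0"
    unfolding G by (simp add: mult_unit_dvd_iff)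
  then show ?thesis
    using F0_dvd[OF F] by (rule dvd_trans)
qed

lemma hom_pderiv_irreducible_nonzero:
  fixes L :: "'b::field poly" and s :: "'b poly \<Rightarrow> 'c::comm_ring_1"
  assumes s: "comm_ring_hom s" and const: "\<And>c. c \<noteq> 0 \<Longrightarrow> s [:c:] \<noteq> 0"
    and L: "irreducible L" "s L = 0" and L': "pderiv L \<noteq> 0"
  shows "s (pderiv L) \<noteq> 0"
proof
  assume "s (pderiv L) = 0"
  then have "L dvd pderiv L"
    using irreducible_dvd_if_hom_eq_0[OF s _ L] const by blast
  then have "degree L \<le> degree (pderiv L)"
    using L' by (rule dvd_imp_degree_le)
  moreover have "degree (pderiv L) < degree L"
  proof -
    have "degree L \<noteq> 0"
    proof
      assume "degree L = 0"
      then obtain c where "L = [:c:]"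
        by (metis degree_eq_zeroE)
      then show False
        using L' by simp
    qed
    moreover have "degree (pderiv L) \<le> degree L - 1"
      by (rule degree_le) (auto simp: coeff_pderiv coeff_eq_0)
    ultimately show ?thesis
      by linarith
  qed
  ultimately show False
    by simp
qed

section \<open>Puiseux expansions of elements of $A$\<close>

lemma degree_liftm [simp]: "degree (liftm m) = degree m"
  unfolding liftm_def by simp

lemma degree_pos_if_irreducible_liftm:
  assumes "irreducible (liftm m)"
  shows "0 < degree m"
proof -
  have "liftm m \<noteq> 0" "\<not> is_unit (liftm m)"
    using assms by auto
  then have "degree (liftm m) \<noteq> 0"
    by (simp add: is_unit_iff_degree del: degree_liftm)
  then show ?thesis
    by simp
qed

lemma mod_liftm_in_A_carrier:
  assumes "0 < degree m"
  shows "F mod liftm m \<in> A_carrier m"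
proof -
  have "liftm m \<noteq> 0"
    using assms by (metis degree_0 degree_liftm less_irrefl)
  then show ?thesis
    unfolding A_carrier_def using assms degree_mod_less'[of "liftm m" F]
    by (cases "F mod liftm m = 0") auto
qed

lemma mod_liftm_eq_self: "f \<in> A_carrier m \<Longrightarrow> f mod liftm m = f"
  unfolding A_carrier_def by (simp add: mod_poly_less)

lemma pderiv_liftm_nonzero:
  fixes m :: "'a::{field_char_0,field_gcd} poly poly"
  assumes "0 < degree m"
  shows "pderiv (liftm m) \<noteq> 0"
proof -
  obtain k where k: "degree (liftm m) = Suc k"
    using assms by (cases "degree m") auto
  have "(of_nat (Suc k) :: 'a poly fract) = to_fract (of_nat (Suc k))"
    by (rule to_fract_hom.hom_of_nat[symmetric])
  also have "(of_nat (Suc k) :: 'a poly) = [:of_nat (Suc k):]"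
    by (rule of_nat_poly)
  finally have "(of_nat (Suc k) :: 'a poly fract) \<noteq> 0"
    by (simp only: to_fract_hom.hom_0_iff pCons_eq_0_iff of_nat_eq_0_iff) simp
  moreover have "coeff (liftm m) (Suc k) \<noteq> 0"
    using k by (metis degree_0 leading_coeff_0_iff nat.distinct(1))
  ultimately have "coeff (pderiv (liftm m)) k \<noteq> 0"
    by (simp only: coeff_pderiv mult_eq_0_iff) simp
  then show ?thesis
    by auto
qed

lemma is_derivation_0:
  assumes der: "is_derivation m D" and deg: "0 < degree m"
  shows "D 0 = 0"
proof -
  have "0 \<in> A_carrier m"
    using deg by (simp add: A_carrier_def)
  then have "D 0 + 0 = D 0 + D 0"
    using der unfolding is_derivation_def by (metis add.right_neutral)
  then show ?thesis
    by (simp only: add_left_cancel)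
qed

locale puiseux_branch = puiseux_chart +
  fixes m :: "'a poly poly" and phi :: "'a alg_closure fls"
  assumes root: "puiseux_root m a r phi" and irreducible_m: "irreducible (liftm m)"
begin

definition expand :: "'a poly fract poly \<Rightarrow> 'a alg_closure fls" where
  "expand F = poly (map_poly (subst_rf a r) F) phi"

sublocale subst_rf_poly_hom: map_poly_comm_ring_hom "subst_rf a r" ..

sublocale expand_hom: comm_ring_hom expand
  by unfold_locales
    (simp_all add: expand_def subst_rf_poly_hom.hom_add subst_rf_poly_hom.hom_mult)

lemma expand_const: "expand [:c:] = subst_rf a r c"
  unfolding expand_def by (simp add: Polynomial.map_poly_pCons)

lemma expand_smult: "expand (smult c F) = subst_rf a r c * expand F"
  unfolding expand_def by (subst Polynomial.map_poly_smult) (simp_all add: subst_rf_hom.hom_mult)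

lemma expand_liftm: "expand (liftm m) = 0"
  using root unfolding puiseux_root_def expand_def .

lemma expand_mod_liftm: "expand (F mod liftm m) = expand F"
  unfolding minus_div_mult_eq_mod[symmetric]
  by (simp add: expand_hom.hom_minus expand_hom.hom_mult expand_liftm)

lemma expand_A_mult: "expand (A_mult m f g) = expand f * expand g"
  unfolding A_mult_def expand_mod_liftm expand_hom.hom_mult ..

lemma degree_m_pos: "0 < degree m"
  by (rule degree_pos_if_irreducible_liftm[OF irreducible_m])

lemma derivation_along_expand_D:
  assumes der: "is_derivation m D"
  shows "derivation_along expand (\<lambda>c. subst_rf a r (rf_deriv c)) (\<lambda>F. expand (D (F mod liftm m)))"
  unfolding derivation_along_def
proof (intro conjI allI)
  have car: "F mod liftm m \<in> A_carrier m" for F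
    by (rule mod_liftm_in_A_carrier[OF degree_m_pos])
  have D_add: "D (f + g) = D f + D g"
    and D_mult: "D (A_mult m f g) = A_mult m (D f) g + A_mult m f (D g)"
    if "f \<in> A_carrier m" "g \<in> A_carrier m" for f g
    using der that unfolding is_derivation_def by blast+
  fix F G
  show "expand (D ((F + G) mod liftm m)) = expand (D (F mod liftm m)) + expand (D (G mod liftm m))"
    unfolding poly_mod_add_left D_add[OF car car] expand_hom.hom_add ..
  have "(F * G) mod liftm m = A_mult m (F mod liftm m) (G mod liftm m)"
    unfolding A_mult_def by (simp add: mod_mult_eq)
  then show "expand (D ((F * G) mod liftm m))
      = expand (D (F mod liftm m)) * expand G + expand F * expand (D (G mod liftm m))"
    using D_mult[OF car car] by (simp add: expand_hom.hom_add expand_A_mult expand_mod_liftm)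
next
  fix c
  have "D [:c:] = [:rf_deriv c:]"
    using der unfolding is_derivation_def by blast
  moreover have "[:c:] mod liftm m = [:c:]"
    using degree_m_pos by (simp add: mod_poly_less)
  ultimately show "expand (D ([:c:] mod liftm m)) = subst_rf a r (rf_deriv c)"
    by (simp add: expand_const)
qed

lemma derivation_along_dx_expand:
  "derivation_along expand (\<lambda>c. subst_rf a r (rf_deriv c)) (\<lambda>F. dx (expand F))"
  unfolding derivation_along_def
  by (simp add: expand_hom.hom_add expand_hom.hom_mult dx_add dx_mult expand_const dx_subst_rf)

text \<open>Both sides are derivations along the expansion that agree on $K(x)$ and kill $m$, whose
  derivative does not vanish at the root \<open>phi\<close> because $m$ is irreducible.\<close>

lemma expand_derivation:
  assumes der: "is_derivation m D" and g: "g \<in> A_carrier m"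
  shows "expand (D g) = dx (expand g)"
proof -
  have "expand (D (liftm m mod liftm m)) = 0"
    by (simp add: is_derivation_0[OF der degree_m_pos])
  moreover have "dx (expand (liftm m)) = 0"
    by (simp add: expand_liftm dx_def)
  moreover have "expand (pderiv (liftm m)) \<noteq> 0"
    by (rule hom_pderiv_irreducible_nonzero[OF expand_hom.comm_ring_hom_axioms _ irreducible_m
          expand_liftm pderiv_liftm_nonzero[OF degree_m_pos]])
      (simp add: expand_const subst_rf_nonzero)
  ultimately have "expand (D (g mod liftm m)) = dx (expand g)"
    by (rule derivation_along_unique[OF expand_hom.comm_ring_hom_axioms
          derivation_along_expand_D[OF der] derivation_along_dx_expand])
  then show ?thesis
    unfolding mod_liftm_eq_self[OF g] .
qed

lemma fls_subdegree_expand_nonneg_if_integral: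
  "integral m f \<Longrightarrow> 0 \<le> fls_subdegree (expand f)"
  using r_pos root unfolding integral_def expand_def by blast

text \<open>If $g$ had negative valuation, $p\,g'$ would have valuation
  $r \cdot \mathrm{ord}_a p + \mathrm{val}\, g - r < 0$.\<close>

lemma fls_subdegree_expand_nonneg_if_derivative:
  assumes der: "is_derivation m D" and g: "g \<in> A_carrier m"
    and p: "p \<noteq> 0" and simple: "order a (map_poly to_ac p) \<le> 1"
    and bounded: "0 \<le> fls_subdegree (expand_poly p * expand (D g))"
  shows "0 \<le> fls_subdegree (expand g)"
proof (rule ccontr)
  assume "\<not> 0 \<le> fls_subdegree (expand g)"
  then have neg: "fls_subdegree (expand g) < 0"
    by simp
  have "fls_subdegree (expand_poly p * expand (D g))
      = int r * int (order a (map_poly to_ac p)) + fls_subdegree (expand g) - int r"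
    unfolding expand_derivation[OF der g]
    using expand_poly_nonzero[OF p] dx_subdegree_neg[OF neg]
    by (simp add: fls_subdegree_mult fls_subdegree_expand_poly[OF p])
  moreover have "int r * int (order a (map_poly to_ac p)) \<le> int r"
    using simple by (intro mult_left_le) auto
  ultimately show False
    using bounded neg by linarith
qed

end

lemma gcd_pderiv_eq_1_if_squarefree:
  fixes s :: "'a::{field_char_0,field_gcd} poly"
  assumes sq: "squarefree s"
  shows "gcd s (pderiv s) = 1"
proof (rule ccontr)
  assume "gcd s (pderiv s) \<noteq> 1"
  then have "\<not> is_unit (gcd s (pderiv s))"
    by (metis is_unit_gcd_iff)
  moreover have "gcd s (pderiv s) \<noteq> 0"
    using sq by auto
  ultimately obtain p where p: "prime p" "p dvd gcd s (pderiv s)"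
    using prime_divisor_exists by blast
  then have "p dvd s" and p_dvd_s': "p dvd pderiv s"
    using dvd_trans gcd_dvd1 gcd_dvd2 by blast+
  then obtain k where k: "s = p * k"
    by (auto simp: dvd_def)
  have "pderiv s = p * pderiv k + k * pderiv p"
    unfolding k by (rule pderiv_mult)
  then have "p dvd k * pderiv p"
    using p_dvd_s' by (metis dvd_add_right_iff dvd_triv_left)
  moreover have "degree p \<noteq> 0"
  proof
    assume "degree p = 0"
    moreover have "p \<noteq> 0"
      using p(1) by auto
    ultimately have "is_unit p"
      using is_unit_iff_degree[of p] by simp
    then show False
      using p(1) not_prime_unit by blast
  qed
  then have "\<not> p dvd pderiv p"
    by (rule not_dvd_pderiv)
  ultimately have "p dvd k"
    using p(1) prime_dvd_mult_iff by blast
  then have "p ^ 2 dvd s"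
    unfolding k by (simp add: power2_eq_square mult_dvd_mono)
  then have "is_unit p"
    using sq squarefreeD by blast
  then show False
    using p(1) not_prime_unit by blast
qed

lemma rsquarefree_map_poly_if_squarefree:
  fixes s :: "'a::{field_char_0,field_gcd} poly" and f :: "'a \<Rightarrow> 'b::field_char_0"
  assumes f: "field_hom f" and sq: "squarefree s"
  shows "rsquarefree (map_poly f s)"
proof -
  interpret f: field_hom f by (rule f)
  interpret fp: map_poly_idom_hom f ..
  obtain u v where "u * s + v * pderiv s = 1"
    using bezout_coefficients_fst_snd[of s "pderiv s"] gcd_pderiv_eq_1_if_squarefree[OF sq]
    by metis
  then have "map_poly f (u * s + v * pderiv s) = 1"
    by simp
  then have "map_poly f u * map_poly f s + map_poly f v * pderiv (map_poly f s) = 1"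
    by (simp add: f.map_poly_pderiv fp.hom_add fp.hom_mult)
  then have "poly (map_poly f u) x * poly (map_poly f s) x
      + poly (map_poly f v) x * poly (pderiv (map_poly f s)) x = 1" for x
    by (metis poly_1 poly_add poly_mult)
  then show ?thesis
    unfolding rsquarefree_roots by (metis add_0 mult_zero_right zero_neq_one)
qed

section \<open>Coordinates, discriminants and determinants\<close>

lemma lincomb_Suc: "lincomb (Suc k) c W = lincomb k c W + smult (c k) (W k)"
  unfolding lincomb_def by simp

lemma lincomb_cong: "(\<And>i. i < k \<Longrightarrow> c i = c' i) \<Longrightarrow> lincomb k c W = lincomb k c' W"
  unfolding lincomb_def by (intro sum.cong) auto

lemma smult_lincomb: "smult x (lincomb k c W) = lincomb k (\<lambda>i. x * c i) W"
  unfolding lincomb_def by (simp add: smult_sum2)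

lemma lincomb_diff: "lincomb k a W - lincomb k b W = lincomb k (\<lambda>i. a i - b i) W"
  unfolding lincomb_def by (simp add: sum_subtractf[symmetric] smult_diff_left)

lemma lincomb_in_A_carrier:
  assumes "\<And>i. i < k \<Longrightarrow> W i \<in> A_carrier m" and "0 < degree m"
  shows "lincomb k c W \<in> A_carrier m"
  using assms(1)
proof (induction k)
  case 0
  then show ?case
    using assms(2) by (simp add: lincomb_def A_carrier_def)
next
  case (Suc k)
  then have "degree (lincomb k c W) < degree m" "degree (smult (c k) (W k)) < degree m"
    unfolding A_carrier_def using degree_smult_le[of "c k" "W k"] by auto
  then show ?case
    unfolding lincomb_Suc A_carrier_def by (simp add: degree_add_less)
qed

lemma lincomb_compose:
  "lincomb k a (\<lambda>i. lincomb k (b i) U) = lincomb k (\<lambda>j. \<Sum>i<k. a i * b i j) U"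
proof -
  have "lincomb k a (\<lambda>i. lincomb k (b i) U) = (\<Sum>i<k. \<Sum>j<k. smult (a i * b i j) (U j))"
    unfolding lincomb_def by (simp add: smult_sum2)
  also have "\<dots> = (\<Sum>j<k. \<Sum>i<k. smult (a i * b i j) (U j))"
    by (rule sum.swap)
  also have "\<dots> = lincomb k (\<lambda>j. \<Sum>i<k. a i * b i j) U"
    unfolding lincomb_def by (simp add: smult_sum)
  finally show ?thesis .
qed

lemma lincomb_basis_inject:
  assumes W: "is_basis m W" and eq: "lincomb (degree m) a W = lincomb (degree m) b W"
    and i: "i < degree m"
  shows "a i = b i"
proof -
  have "lincomb (degree m) (\<lambda>i. a i - b i) W = 0"
    using eq unfolding lincomb_diff[symmetric] by simp
  then have "a i - b i = 0"
    using W i unfolding is_basis_def by blast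
  then show ?thesis
    by simp
qed

lemma coords_lincomb:
  assumes W: "is_basis m W" and j: "j < degree m"
  shows "coords m W (lincomb (degree m) c W) j = c j"
proof -
  define c0 where "c0 i = (if i < degree m then c i else 0)" for i
  have "coords m W (lincomb (degree m) c W) = c0"
    unfolding coords_def
  proof (rule the_equality)
    show "lincomb (degree m) c W = lincomb (degree m) c0 W \<and> (\<forall>i\<ge>degree m. c0 i = 0)"
      unfolding c0_def by (auto intro: lincomb_cong)
    fix c'
    assume c': "lincomb (degree m) c W = lincomb (degree m) c' W \<and> (\<forall>i\<ge>degree m. c' i = 0)"
    show "c' = c0"
    proof
      fix i
      show "c' i = c0 i"
        using lincomb_basis_inject[OF W, of c' c i] c' unfolding c0_def by (cases "i < degree m") auto
    qed
  qed
  then show ?thesis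
    using j unfolding c0_def by simp
qed

lemma A_mult_add_left: "A_mult m (f + g) h = A_mult m f h + A_mult m g h"
  unfolding A_mult_def by (simp add: distrib_right poly_mod_add_left)

lemma A_mult_smult_left: "A_mult m (smult c f) g = smult c (A_mult m f g)"
  unfolding A_mult_def by (simp add: mod_smult_left)

lemma A_mult_commute: "A_mult m f g = A_mult m g f"
  unfolding A_mult_def by (simp add: mult.commute)

lemma A_trace_add: "A_trace m (f + g) = A_trace m f + A_trace m g"
  unfolding A_trace_def by (simp add: A_mult_add_left sum.distrib)

lemma A_trace_smult: "A_trace m (smult c f) = c * A_trace m f"
  unfolding A_trace_def by (simp add: A_mult_smult_left sum_distrib_left)

lemma A_trace_A_mult_lincomb_left:
  "A_trace m (A_mult m (lincomb k a U) g) = (\<Sum>i<k. a i * A_trace m (A_mult m (U i) g))"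
proof (induction k)
  case 0
  show ?case
    by (simp add: lincomb_def A_mult_def A_trace_def)
next
  case (Suc k)
  then show ?case
    by (simp add: lincomb_Suc A_mult_add_left A_mult_smult_left A_trace_add A_trace_smult)
qed

lemma A_trace_A_mult_lincomb:
  "A_trace m (A_mult m (lincomb k a U) (lincomb k b U))
    = (\<Sum>i<k. \<Sum>j<k. a i * b j * A_trace m (A_mult m (U i) (U j)))"
proof -
  have "A_trace m (A_mult m (lincomb k a U) (lincomb k b U))
      = (\<Sum>i<k. a i * A_trace m (A_mult m (U i) (lincomb k b U)))"
    by (rule A_trace_A_mult_lincomb_left)
  also have "\<dots> = (\<Sum>i<k. a i * A_trace m (A_mult m (lincomb k b U) (U i)))"
    by (simp only: A_mult_commute[of m "U i" "lincomb k b U" for i])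
  also have "\<dots> = (\<Sum>i<k. \<Sum>j<k. a i * b j * A_trace m (A_mult m (U j) (U i)))"
    unfolding A_trace_A_mult_lincomb_left by (simp add: sum_distrib_left mult.assoc)
  also have "\<dots> = (\<Sum>i<k. \<Sum>j<k. a i * b j * A_trace m (A_mult m (U i) (U j)))"
    by (simp only: A_mult_commute[of m "U j" "U i" for i j])
  finally show ?thesis .
qed

text \<open>The Gram matrix of the trace form transforms as $T G T^t$.\<close>

lemma Disc_change_of_basis:
  fixes m :: "'a::field_gcd poly poly" and T :: "'a poly fract mat"
  assumes T: "T \<in> carrier_mat (degree m) (degree m)"
    and WTU: "\<forall>i<degree m. W i = lincomb (degree m) (\<lambda>j. T $$ (i, j)) U"
  shows "Disc m W = det T ^ 2 * Disc m U"
proof -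
  define k where "k = degree m"
  define G where "G = mat k k (\<lambda>(i, j). A_trace m (A_mult m (U i) (U j)))"
  have T': "T \<in> carrier_mat k k" and G: "G \<in> carrier_mat k k"
    using T unfolding k_def G_def by simp_all
  have gram: "mat k k (\<lambda>(i, j). A_trace m (A_mult m (W i) (W j))) = T * G * transpose_mat T"
  proof (rule eq_matI)
    fix i j
    assume "i < dim_row (T * G * transpose_mat T)" "j < dim_col (T * G * transpose_mat T)"
    then have i: "i < k" and j: "j < k"
      using T' G by auto
    have "(T * G * transpose_mat T) $$ (i, j)
        = (\<Sum>h<k. \<Sum>l<k. T $$ (i, h) * T $$ (j, l) * G $$ (h, l))"
      using T' G i j
      by (simp add: scalar_prod_def sum_distrib_left algebra_simps lessThan_atLeast0)
    also have "\<dots> = A_trace m (A_mult m (W i) (W j))"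
      using WTU i j unfolding k_def G_def by (simp add: A_trace_A_mult_lincomb)
    finally show "mat k k (\<lambda>(i, j). A_trace m (A_mult m (W i) (W j))) $$ (i, j)
        = (T * G * transpose_mat T) $$ (i, j)"
      using i j by simp
  qed (use T' G in auto)
  have "det (T * G * transpose_mat T) = det T * det G * det T"
    using T' G by (simp add: det_mult[of _ k] det_transpose)
  then show ?thesis
    unfolding Disc_def k_def[symmetric] gram G_def[symmetric] by (simp add: power2_eq_square)
qed

text \<open>Multiply $q^t T = u\,c^t$ on the right by the adjugate of $T$: $u$ divides $\det T \cdot q_l$
  for every $l$, and $\gcd(u, q) = 1$.\<close>

lemma dvd_det_if_dvd_row_combination:
  fixes T :: "'b::{idom,semiring_Gcd} mat"
  assumes T: "T \<in> carrier_mat k k"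
    and comb: "\<forall>j<k. u * c j = (\<Sum>i<k. q i * T $$ (i, j))"
    and coprime: "Gcd (insert u (q ` {..<k})) = 1"
  shows "u dvd det T"
proof -
  have adj: "adj_mat T \<in> carrier_mat k k" "T * adj_mat T = det T \<cdot>\<^sub>m 1\<^sub>m k"
    using adj_mat[OF T] by auto
  have "u dvd det T * q l" if l: "l < k" for l
  proof -
    have "det T * q l = (\<Sum>i<k. q i * (T * adj_mat T) $$ (i, l))"
      using l by (simp add: adj(2) if_distrib[of "(*) _"] sum.delta mult.commute cong: if_cong)
    also have "\<dots> = (\<Sum>i<k. \<Sum>j<k. q i * T $$ (i, j) * adj_mat T $$ (j, l))"
      using T adj(1) l
      by (simp add: scalar_prod_def lessThan_atLeast0 sum_distrib_left mult.assoc)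
    also have "\<dots> = (\<Sum>j<k. (\<Sum>i<k. q i * T $$ (i, j)) * adj_mat T $$ (j, l))"
      by (subst sum.swap) (simp add: sum_distrib_right)
    also have "\<dots> = (\<Sum>j<k. u * c j * adj_mat T $$ (j, l))"
      by (intro sum.cong refl) (simp add: comb)
    also have "\<dots> = u * (\<Sum>j<k. c j * adj_mat T $$ (j, l))"
      by (simp add: sum_distrib_left mult.assoc)
    finally show ?thesis
      by simp
  qed
  then have "u dvd Gcd ((*) (det T) ` insert u (q ` {..<k}))"
    by (auto intro!: Gcd_greatest)
  then show ?thesis
    unfolding Gcd_mult coprime by simp
qed

lemma prime_power_dvd_denominator:
  fixes a e :: "'a::field_gcd poly"
  assumes p: "prime p" and dvd: "p ^ k dvd e" and not_dvd: "\<not> p dvd a" and e: "e \<noteq> 0"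
    and k: "0 < k"
  shows "p ^ k dvd snd (quot_of_fract (Fract a e))"
proof -
  obtain a' b where ab: "quot_of_fract (Fract a e) = (a', b)"
    by force
  have b: "b \<noteq> 0"
    using snd_quot_of_fract_nonzero[of "Fract a e"] ab by simp
  have "Fract a' b = Fract a e"
    using Fract_quot_of_fract[of "Fract a e"] ab by simp
  then have "a' * e = a * b"
    using b e by (simp add: eq_fract)
  then have "p ^ k dvd a * b"
    using dvd by (metis dvd_mult)
  then show ?thesis
    using prime_power_dvd_multD[of p k a b] p not_dvd k ab by simp
qed

lemma denominator_nonzero:
  fixes m :: "'a::field_gcd poly poly"
  assumes W: "is_basis m W" and deg: "0 < degree m"
    and eWMW: "\<forall>i<degree m. smult (to_fract e) (D (W i))
                 = lincomb (degree m) (\<lambda>j. to_fract (M $$ (i, j))) W"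
    and gcd_eM: "Gcd (insert e {M $$ (i, j) | i j. i < degree m \<and> j < degree m}) = 1"
  shows "e \<noteq> 0"
proof
  assume e: "e = 0"
  have "M $$ (i, j) = 0" if "i < degree m" "j < degree m" for i j
  proof -
    have "lincomb (degree m) (\<lambda>j. to_fract (M $$ (i, j))) W = lincomb (degree m) (\<lambda>_. 0) W"
      using eWMW that e by (simp add: lincomb_def)
    from lincomb_basis_inject[OF W this that(2)] show ?thesis
      by simp
  qed
  then have "insert e {M $$ (i, j) | i j. i < degree m \<and> j < degree m} = {0}"
    using deg e by fastforce
  with gcd_eM show False
    by simp
qed

lemma coords_D_basis:
  fixes m :: "'a::field_gcd poly poly"
  assumes W: "is_basis m W" and e: "e \<noteq> 0"
    and eWMW: "\<forall>i<degree m. smult (to_fract e) (D (W i))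
                 = lincomb (degree m) (\<lambda>j. to_fract (M $$ (i, j))) W"
    and i: "i < degree m" and j: "j < degree m"
  shows "coords m W (D (W i)) j = Fract (M $$ (i, j)) e"
proof -
  have "D (W i) = smult (inverse (to_fract e)) (smult (to_fract e) (D (W i)))"
    using e by simp
  also have "\<dots> = lincomb (degree m) (\<lambda>j. Fract (M $$ (i, j)) e) W"
    unfolding eWMW[rule_format, OF i] smult_lincomb by (simp add: Fract_conv_to_fract field_simps)
  finally show ?thesis
    using coords_lincomb[OF W j] by simp
qed

text \<open>A prime $p$ with $p^2 \mid e$ misses some $M_{i,j}$, and then $p^2$ divides the denominator
  of the coordinate $M_{i,j}/e$, hence the normalised $e$.\<close>

lemma squarefree_denominator:
  fixes m :: "'a::field_gcd poly poly"
  assumes W: "is_basis m W" and e: "e \<noteq> 0"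
    and eWMW: "\<forall>i<degree m. smult (to_fract e) (D (W i))
                 = lincomb (degree m) (\<lambda>j. to_fract (M $$ (i, j))) W"
    and gcd_eM: "Gcd (insert e {M $$ (i, j) | i j. i < degree m \<and> j < degree m}) = 1"
    and sqf: "squarefree (norm_e m D W)"
  shows "squarefree e"
proof (rule squarefreeI, rule ccontr)
  fix x
  assume x: "x ^ 2 dvd e" and "\<not> is_unit x"
  moreover have "x \<noteq> 0"
    using x e by auto
  ultimately obtain p where p: "prime p" "p dvd x"
    using prime_divisor_exists by blast
  then have p2: "p ^ 2 dvd e"
    using x by (meson dvd_power_same dvd_trans)
  have "\<not> p dvd Gcd (insert e {M $$ (i, j) | i j. i < degree m \<and> j < degree m})"
    using p(1) not_prime_unit unfolding gcd_eM by blast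
  then obtain i j where ij: "i < degree m" "j < degree m" and not_dvd: "\<not> p dvd M $$ (i, j)"
    using p2 by (auto simp: dvd_Gcd_iff dest: dvd_trans[OF dvd_power[of 2 p]])
  have "p ^ 2 dvd snd (quot_of_fract (coords m W (D (W i)) j))"
    unfolding coords_D_basis[OF W e eWMW ij]
    using prime_power_dvd_denominator[OF p(1) p2 not_dvd e] by simp
  also have "\<dots> dvd norm_e m D W"
    unfolding norm_e_def using ij by (intro dvd_Lcm) blast
  finally show False
    using sqf p(1) squarefreeD not_prime_unit by blast
qed

section \<open>Integrality of antiderivatives\<close>

lemma integral_if_derivative_over_squarefree:
  fixes m :: "'a::{field_char_0,field_gcd} poly poly"
  assumes irr: "irreducible (liftm m)" and der: "is_derivation m D"
    and W: "\<forall>i<degree m. integral m (W i)"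
    and s: "s \<noteq> 0" "squarefree s" and g: "g \<in> A_carrier m"
    and Dg: "smult (to_fract s) (D g) = lincomb (degree m) (\<lambda>i. to_fract (c i)) W"
  shows "integral m g"
  unfolding integral_def
proof (intro allI impI)
  fix a r phi
  assume "r \<ge> 1" and "puiseux_root m a r phi"
  then interpret puiseux_branch a r m phi
    using irr by unfold_locales
  have simple: "order a (map_poly to_ac s) \<le> 1"
    using rsquarefree_map_poly_if_squarefree[OF to_ac_hom.field_hom_axioms s(2)]
    unfolding rsquarefree_def by (metis le_less_linear less_one nat_less_le)
  have "expand_poly s * expand (D g) = expand (smult (to_fract s) (D g))"
    by (simp add: expand_smult subst_rf_to_fract)
  also have "\<dots> = (\<Sum>i<degree m. expand_poly (c i) * expand (W i))"
    unfolding Dg lincomb_def by (simp add: expand_hom.hom_sum expand_smult subst_rf_to_fract)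
  finally have bounded: "0 \<le> fls_subdegree (expand_poly s * expand (D g))"
    using W by (auto intro!: fls_subdegree_nonneg_sum fls_subdegree_nonneg_mult
        fls_subdegree_expand_poly_nonneg fls_subdegree_expand_nonneg_if_integral)
  show "0 \<le> fls_subdegree (poly (map_poly (subst_rf a r) g) phi)"
    using fls_subdegree_expand_nonneg_if_derivative[OF der g s(1) simple bounded]
    unfolding expand_def .
qed

lemma dvd_det_if_integral:
  fixes m :: "'a::field_gcd poly poly"
  assumes U: "integral_basis m U" and T: "T \<in> carrier_mat (degree m) (degree m)"
    and WTU: "\<forall>i<degree m. W i = lincomb (degree m) (\<lambda>j. to_fract (T $$ (i, j))) U"
    and u: "u \<noteq> 0" and coprime: "Gcd (insert u (q ` {..<degree m})) = 1"
    and g: "g = lincomb (degree m) (\<lambda>i. to_fract (q i) / to_fract u) W"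
    and g_A: "g \<in> A_carrier m" and g_int: "integral m g"
  shows "u dvd det T"
proof -
  let ?n = "degree m"
  obtain c where c: "g = lincomb ?n (\<lambda>j. to_fract (c j)) U"
    using U g_A g_int unfolding integral_basis_def by blast
  have "g = lincomb ?n (\<lambda>i. to_fract (q i) / to_fract u)
      (\<lambda>i. lincomb ?n (\<lambda>j. to_fract (T $$ (i, j))) U)"
    unfolding g lincomb_def[of ?n "\<lambda>i. to_fract (q i) / to_fract u"] using WTU
    by (intro sum.cong refl) simp
  also have "\<dots> = lincomb ?n (\<lambda>j. \<Sum>i<?n. to_fract (q i) / to_fract u * to_fract (T $$ (i, j))) U"
    by (rule lincomb_compose)
  finally have g_U: "g = lincomb ?n (\<lambda>j. \<Sum>i<?n. to_fract (q i) / to_fract u * to_fract (T $$ (i, j))) U" .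
  have Ub: "is_basis m U"
    using U unfolding integral_basis_def by blast
  have "u * c j = (\<Sum>i<?n. q i * T $$ (i, j))" if j: "j < ?n" for j
  proof -
    have "lincomb ?n (\<lambda>j. to_fract (c j)) U
        = lincomb ?n (\<lambda>j. \<Sum>i<?n. to_fract (q i) / to_fract u * to_fract (T $$ (i, j))) U"
      using c g_U by simp
    from lincomb_basis_inject[OF Ub this j]
    have "to_fract u * to_fract (c j) = (\<Sum>i<?n. to_fract (q i) * to_fract (T $$ (i, j)))"
      using u by (simp add: sum_distrib_left)
    then have "to_fract (u * c j) = to_fract (\<Sum>i<?n. q i * T $$ (i, j))"
      by (simp only: to_fract_mult to_fract_sum)
    then show ?thesis
      by (simp only: to_fract_eq_iff)
  qed
  then show ?thesis
    by (intro dvd_det_if_dvd_row_combination[OF T _ coprime, of c]) blast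
qed

lemma Disc_quotient_multiple_of_square:
  fixes m :: "'a::field_gcd poly poly" and T :: "'a poly mat"
  assumes T: "T \<in> carrier_mat (degree m) (degree m)"
    and WTU: "\<forall>i<degree m. W i = lincomb (degree m) (\<lambda>j. to_fract (T $$ (i, j))) U"
    and dvd: "u dvd det T"
  shows "\<exists>c. Disc m W / Disc m U = to_fract (u ^ 2 * c)"
proof -
  obtain w where w: "det T = u * w"
    using dvd ..
  have "\<forall>i<degree m. W i = lincomb (degree m) (\<lambda>j. map_mat to_fract T $$ (i, j)) U"
    using WTU T by (auto intro!: lincomb_cong)
  then have "Disc m W = to_fract (det T) ^ 2 * Disc m U"
    using Disc_change_of_basis[of "map_mat to_fract T" m W U] T by simp
  moreover have "to_fract (det T) ^ 2 = to_fract (u ^ 2 * w ^ 2)"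
    unfolding w by (simp add: power2_eq_square mult_ac)
  ultimately have "Disc m W / Disc m U = to_fract (u ^ 2 * (if Disc m U = 0 then 0 else w ^ 2))"
    by simp
  then show ?thesis
    by blast
qed

theorem lemma9:
  fixes m :: "'a::{field_char_0,field_gcd} poly poly"
    and D :: "'a poly fract poly \<Rightarrow> 'a poly fract poly"
    and W U :: "nat \<Rightarrow> 'a poly fract poly"
    and e d u :: "'a poly"
    and M T :: "'a poly mat"
    and hc qc :: "nat \<Rightarrow> 'a poly"
    and h :: "'a poly fract poly"
  defines "n \<equiv> degree m"
  assumes irr: "irreducible (liftm m)"
    and der: "is_derivation m D"
    and suit: "suitable_basis m D W"
    and M_carrier: "M \<in> carrier_mat n n"
    and eWMW: "\<forall>i<n. smult (to_fract e) (D (W i)) = lincomb n (\<lambda>j. to_fract (M $$ (i, j))) W"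
    and gcd_eM: "Gcd (insert e {M $$ (i, j) | i j. i < n \<and> j < n}) = 1"
    and d_nz: "d \<noteq> 0"
    and h_def: "h = lincomb n (\<lambda>i. to_fract (hc i) / to_fract (d * e)) W"
    and gcd_de: "gcd d e = 1"
    and gcd_hd: "Gcd (insert d (hc ` {..<n})) = 1"
    and d_sqf: "squarefree d"
    and U_ib: "integral_basis m U"
    and T_carrier: "T \<in> carrier_mat n n"
    and WTU: "\<forall>i<n. W i = lincomb n (\<lambda>j. to_fract (T $$ (i, j))) U"
    and u_nz: "u \<noteq> 0"
    and gcd_qu: "Gcd (insert u (qc ` {..<n})) = 1"
    and h_deriv: "h = D (lincomb n (\<lambda>i. to_fract (qc i) / to_fract u) W)"
  shows "u dvd det T \<and> (\<exists>c. Disc m W / Disc m U = to_fract (u ^ 2 * c))"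
proof -
  note eWMW = eWMW[unfolded n_def] and gcd_eM = gcd_eM[unfolded n_def]
    and h_def = h_def[unfolded n_def] and h_deriv = h_deriv[unfolded n_def]
    and T_carrier = T_carrier[unfolded n_def] and WTU = WTU[unfolded n_def]
    and gcd_qu = gcd_qu[unfolded n_def]
  have deg: "0 < degree m"
    by (rule degree_pos_if_irreducible_liftm[OF irr])
  have W: "is_basis m W" "\<forall>i<degree m. integral m (W i)" "squarefree (norm_e m D W)"
    using suit unfolding suitable_basis_def by auto
  have e: "e \<noteq> 0"
    by (rule denominator_nonzero[OF W(1) deg eWMW gcd_eM])
  have "squarefree e"
    by (rule squarefree_denominator[OF W(1) e eWMW gcd_eM W(3)])
  then have de: "d * e \<noteq> 0" "squarefree (d * e)"
    using d_nz e d_sqf gcd_de squarefree_mult_coprime[of d e] by (auto simp: coprime_iff_gcd_eq_1)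
  define g where "g = lincomb (degree m) (\<lambda>i. to_fract (qc i) / to_fract u) W"
  have g_A: "g \<in> A_carrier m"
    using W(1) deg unfolding g_def is_basis_def by (intro lincomb_in_A_carrier) auto
  have "smult (to_fract (d * e)) (D g) = lincomb (degree m) (\<lambda>i. to_fract (hc i)) W"
    using de(1) unfolding g_def h_deriv[symmetric] h_def smult_lincomb by (intro lincomb_cong) simp
  then have "integral m g"
    by (rule integral_if_derivative_over_squarefree[OF irr der W(2) de g_A])
  then have "u dvd det T"
    by (rule dvd_det_if_integral[OF U_ib T_carrier WTU u_nz gcd_qu g_def g_A])
  with Disc_quotient_multiple_of_square[OF T_carrier WTU] show ?thesis
    by blast
qed

end
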